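(* Let $\Gamma=(V,E,\varphi)$ be an oriented hypergraph with adjacency matrix $A\neq \mathbf 0$, strong coloring number $\chi(\Gamma)$, and smallest and largest normalized Laplacian eigenvalues $\lambda_1$ and $\lambda_N$. Then $\lambda_1<1<\lambda_N$ and \[ \chi(\Gamma)\;\geq\;\frac{\lambda_N-\lambda_1}{\min\{\lambda_N-1,\;1-\lambda_1\}} . \] (If instead $A=\mathbf 0$, then $\lambda_1=\lambda_N=1$, the right-hand side is interpreted as $1$ by convention, and the inequality is trivial.)
   Context: An oriented hypergraph $\Gamma=(V,E,\varphi)$ consists of a finite vertex set $V$ with $|V|=N$, an edge set $E\subseteq\mathcal P(V)$, and a function $\varphi\colon V\times E\to\{-1,0,1\}$ with $\varphi(v,e)\neq 0$ iff $v\in e$. Two vertices $v,w\in e$ are co-oriented in $e$ if $\varphi(v,e)=\varphi(w,e)$ and anti-oriented in $e$ if $\varphi(v,e)=-\varphi(w,e)$. The degree is $\deg v=|\{e\in E: v\in e\}|$; we assume every vertex has degree at least $1$, and $D=\mathrm{diag}(\deg v)_{v\in V}$. The adjacency matrix $A$ is the $N\times N$ matrix with $A_{v,v}=0$ and, for $v\neq w$, $A_{v,w}=(\#\text{edges in which } v,w \text{ are anti-oriented})-(\#\text{edges in which } v,w \text{ are co-oriented})$. The normalized Laplacian is $L=\mathrm{Id}-D^{-1}A$ (equivalently $D^{-1}\mathcal I\mathcal I^\top$ with incidence matrix $\mathcal I_{v,e}=\varphi(v,e)$); it is self-adjoint for $\langle f,g\rangle=\sum_{v}\deg v\, f(v)g(v)$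 on functions $V\to\mathbb R$, and its (real) eigenvalues are $\lambda_1\le\dots\le\lambda_N$. A proper strong $k$-coloring is a map $V\to\{1,\dots,k\}$ such that any two distinct vertices lying in a common edge receive different colors; $\chi(\Gamma)$ is the least $k$ for which one exists. *)

theory Defs
  imports Complex_Main
begin

text \<open>We also include the standing assumption that every vertex has degree at least 1.\<close>

definition deg :: "'a set set \<Rightarrow> 'a \<Rightarrow> nat" where
  "deg E v = card {e \<in> E. v \<in> e}"

definition oriented_hypergraph :: "'a set \<Rightarrow> 'a set set \<Rightarrow> ('a \<Rightarrow> 'a set \<Rightarrow> int) \<Rightarrow> bool" where
  "oriented_hypergraph V E phi \<longleftrightarrow>
     finite V \<and> E \<subseteq> Pow V \<and>
     (\<forall>v\<in>V. \<forall>e\<in>E. phi v e \<in> {-1, 0, 1} \<and> (phi v e \<noteq> 0 \<longleftrightarrow> v \<in> e)) \<and>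
     (\<forall>v\<in>V. deg E v \<ge> 1)"

definition adj :: "'a set set \<Rightarrow> ('a \<Rightarrow> 'a set \<Rightarrow> int) \<Rightarrow> 'a \<Rightarrow> 'a \<Rightarrow> int" where
  "adj E phi v w =
     (if v = w then 0 else
        int (card {e \<in> E. v \<in> e \<and> w \<in> e \<and> phi v e = - phi w e})
      - int (card {e \<in> E. v \<in> e \<and> w \<in> e \<and> phi v e = phi w e}))"

definition norm_laplacian ::
  "'a set \<Rightarrow> 'a set set \<Rightarrow> ('a \<Rightarrow> 'a set \<Rightarrow> int) \<Rightarrow> ('a \<Rightarrow> real) \<Rightarrow> 'a \<Rightarrow> real" where
  "norm_laplacian V E phi f v =
     f v - (1 / real (deg E v)) * (\<Sum>w\<in>V. real_of_int (adj E phi v w) * f w)"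

definition laplacian_eigenvalues :: "'a set \<Rightarrow> 'a set set \<Rightarrow> ('a \<Rightarrow> 'a set \<Rightarrow> int) \<Rightarrow> real set" where
  "laplacian_eigenvalues V E phi =
     {\<mu>. \<exists>f. (\<exists>v\<in>V. f v \<noteq> 0) \<and> (\<forall>v\<in>V. norm_laplacian V E phi f v = \<mu> * f v)}"

definition lambda_min :: "'a set \<Rightarrow> 'a set set \<Rightarrow> ('a \<Rightarrow> 'a set \<Rightarrow> int) \<Rightarrow> real" where
  "lambda_min V E phi = Min (laplacian_eigenvalues V E phi)"

definition lambda_max :: "'a set \<Rightarrow> 'a set set \<Rightarrow> ('a \<Rightarrow> 'a set \<Rightarrow> int) \<Rightarrow> real" where
  "lambda_max V E phi = Max (laplacian_eigenvalues V E phi)"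

definition strong_coloring :: "'a set \<Rightarrow> 'a set set \<Rightarrow> nat \<Rightarrow> ('a \<Rightarrow> nat) \<Rightarrow> bool" where
  "strong_coloring V E k c \<longleftrightarrow>
     (\<forall>v\<in>V. c v \<in> {1..k}) \<and>
     (\<forall>e\<in>E. \<forall>v\<in>e. \<forall>w\<in>e. v \<noteq> w \<longrightarrow> c v \<noteq> c w)"

definition chromatic_number :: "'a set \<Rightarrow> 'a set set \<Rightarrow> nat" where
  "chromatic_number V E = (LEAST k. \<exists>c. strong_coloring V E k c)"

end

theory Submission
  imports Defs "HOL-Analysis.Function_Topology" "HOL-Library.Function_Algebras"
begin

text \<open>
  The Laplacian eigenvalues are the numbers 1 - m for the eigenvalues m of the pencil
  A f = m D f, and the extreme eigenvalues of the pencil are the extreme values of the Rayleigh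
  quotient (A f, f) / (D f, f), attained on the compact D-unit sphere. Since A has zero diagonal
  and an entry A v w \<noteq> 0, the quotient takes both signs on the vectors 1_v \<plusminus> A v w 1_w,
  so the pencil has eigenvalues of both signs, i.e. lambda_1 < 1 < lambda_N.

  For Hoffman's bound take an eigenvector x of the largest pencil eigenvalue M and a proper
  colouring with k colours. The vectors x (1_i - 1_j), over all ordered pairs of colours, obey the
  Rayleigh inequality for the smallest eigenvalue m; summing these inequalities, every term
  inside a colour class drops out because A vanishes there, and what is left is
  M + (k - 1) m \<le> 0, i.e. lambda_N - lambda_1 \<le> k (lambda_N - 1). The same argument for -A
  gives lambda_N - lambda_1 \<le> k (1 - lambda_1).
\<close>

lemma quadratic_nonneg_imp_linear_coeff_eq_0:
  fixes X Y :: real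
  assumes "\<And>t. 0 \<le> 2 * t * X + t\<^sup>2 * Y"
  shows "X = 0"
proof (rule ccontr)
  assume X: "X \<noteq> 0"
  then have "0 < X * X" by (simp add: power2_eq_square[symmetric])
  show False
  proof (cases "Y \<le> 0")
    case True
    have "0 \<le> 2 * (-X) * X + (-X)\<^sup>2 * Y" by (rule assms)
    moreover have "(-X)\<^sup>2 * Y \<le> 0" using True by (simp add: mult_nonneg_nonpos)
    ultimately show False using \<open>0 < X * X\<close> by (simp add: power2_eq_square)
  next
    case False
    have "0 \<le> 2 * (-X/Y) * X + (-X/Y)\<^sup>2 * Y" by (rule assms)
    also have "\<dots> = -(X * X) / Y" using False by (simp add: power2_eq_square field_simps)
    also have "\<dots> < 0" using \<open>0 < X * X\<close> False by simp
    finally show False by simp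
  qed
qed

lemma sum_product_differences:
  fixes f g :: "'i \<Rightarrow> 'a::comm_ring_1"
  shows "(\<Sum>i\<in>I. \<Sum>j\<in>I. (f i - f j) * (g i - g j))
    = 2 * (of_nat (card I) * (\<Sum>i\<in>I. f i * g i) - (\<Sum>i\<in>I. f i) * (\<Sum>i\<in>I. g i))"
proof -
  have "(\<Sum>i\<in>I. \<Sum>j\<in>I. (f i - f j) * (g i - g j))
      = (\<Sum>i\<in>I. \<Sum>j\<in>I. f i * g i) + (\<Sum>i\<in>I. \<Sum>j\<in>I. f j * g j)
        - (\<Sum>i\<in>I. \<Sum>j\<in>I. f i * g j) - (\<Sum>i\<in>I. \<Sum>j\<in>I. f j * g i)"
    by (simp add: sum.distrib sum_subtractf algebra_simps)
  also have "(\<Sum>i\<in>I. \<Sum>j\<in>I. f j * g i) = (\<Sum>i\<in>I. \<Sum>j\<in>I. f i * g j)"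
    by (rule sum.swap)
  finally show ?thesis
    by (simp add: sum_product[symmetric] sum_distrib_left algebra_simps)
qed

lemma sum_color_difference_products:
  assumes "finite C" "a \<in> C" "a' \<in> C"
  shows "(\<Sum>(i, j)\<in>C \<times> C. (of_bool (a = i) - of_bool (a = j)) * (of_bool (a' = i) - of_bool (a' = j)))
    = 2 * real (card C) * of_bool (a = a') - 2"
  using assms
  by (simp add: sum.cartesian_product[symmetric] sum_product_differences of_bool_def
      if_distrib[of "\<lambda>x. x * _"] sum.delta cong: if_cong)

lemma compact_Pi_atLeastAtMost: "compact (Pi UNIV (\<lambda>i. {a i..b i :: real}))"
proof -
  have "compactin (product_topology (\<lambda>_. euclidean) UNIV) (PiE UNIV (\<lambda>i. {a i..b i}))"
    by (subst compactin_PiE) auto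
  then show ?thesis by (simp add: euclidean_product_topology PiE_UNIV_domain)
qed

lemma continuous_on_coordinate [continuous_intros]:
  "continuous_on S (\<lambda>x. x i :: 'b::topological_space)"
  by (rule continuous_on_subset[OF continuous_on_product_coordinates subset_UNIV])

lemma sum_fun_apply: "(\<Sum>i\<in>I. f i) x = (\<Sum>i\<in>I. f i x :: 'b::comm_monoid_add)"
  by (induction I rule: infinite_finite_induct) auto

lemma Min_image_diff:
  fixes S :: "'a::linordered_ab_group_add set"
  assumes "finite S" "S \<noteq> {}"
  shows "Min ((\<lambda>x. c - x) ` S) = c - Max S"
proof (rule Min_eqI)
  show "c - Max S \<in> (\<lambda>x. c - x) ` S" using Max_in[OF assms] by (rule imageI)
qed (use assms in auto)

lemma Max_image_diff:
  fixes S :: "'a::linordered_ab_group_add set"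
  assumes "finite S" "S \<noteq> {}"
  shows "Max ((\<lambda>x. c - x) ` S) = c - Min S"
proof (rule Max_eqI)
  show "c - Min S \<in> (\<lambda>x. c - x) ` S" using Min_in[OF assms] by (rule imageI)
qed (use assms in auto)

lemma divide_min_le:
  fixes x k a a' :: real
  assumes "0 < a" "0 < a'" "x \<le> k * a" "x \<le> k * a'"
  shows "x / min a a' \<le> k"
  using assms by (simp add: min_def pos_divide_le_eq)

locale symmetric_pencil =
  fixes V :: "'a set" and b :: "'a \<Rightarrow> 'a \<Rightarrow> real" and d :: "'a \<Rightarrow> real"
  assumes finite_V: "finite V"
    and b_commute: "v \<in> V \<Longrightarrow> w \<in> V \<Longrightarrow> b v w = b w v"
    and d_pos: "v \<in> V \<Longrightarrow> 0 < d v"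
begin

text \<open>For a hypergraph, b is the adjacency matrix A and d the degree matrix D; the eigenvalues
  of the pencil are those of D^-1 A = Id - L. Eigenvectors are only constrained on V.\<close>

definition bform :: "('a \<Rightarrow> real) \<Rightarrow> ('a \<Rightarrow> real) \<Rightarrow> real" where
  "bform f g = (\<Sum>v\<in>V. \<Sum>w\<in>V. b v w * f v * g w)"

definition dform :: "('a \<Rightarrow> real) \<Rightarrow> ('a \<Rightarrow> real) \<Rightarrow> real" where
  "dform f g = (\<Sum>v\<in>V. d v * f v * g v)"

definition is_eigen :: "real \<Rightarrow> ('a \<Rightarrow> real) \<Rightarrow> bool" where
  "is_eigen m f \<longleftrightarrow> (\<forall>v\<in>V. (\<Sum>w\<in>V. b v w * f w) = m * d v * f v)"

definition eigenvalues :: "real set" where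
  "eigenvalues = {m. \<exists>f. (\<exists>v\<in>V. f v \<noteq> 0) \<and> is_eigen m f}"

definition independent_coloring :: "('a \<Rightarrow> 'c) \<Rightarrow> 'c set \<Rightarrow> bool" where
  "independent_coloring c C \<longleftrightarrow> (\<forall>v\<in>V. c v \<in> C) \<and> (\<forall>v\<in>V. \<forall>w\<in>V. c v = c w \<longrightarrow> b v w = 0)"

lemma bform_commute: "bform f g = bform g f"
  unfolding bform_def by (subst sum.swap) (auto intro!: sum.cong simp: b_commute mult_ac)

lemma dform_commute: "dform f g = dform g f"
  unfolding dform_def by (simp add: mult_ac)

lemma bform_cong:
  "(\<And>v. v \<in> V \<Longrightarrow> f v = f' v) \<Longrightarrow> (\<And>v. v \<in> V \<Longrightarrow> g v = g' v)
    \<Longrightarrow> bform f g = bform f' g'"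
  unfolding bform_def by simp

lemma dform_cong:
  "(\<And>v. v \<in> V \<Longrightarrow> f v = f' v) \<Longrightarrow> (\<And>v. v \<in> V \<Longrightarrow> g v = g' v)
    \<Longrightarrow> dform f g = dform f' g'"
  unfolding dform_def by simp

lemma bform_scale: "bform (\<lambda>v. s * f v) (\<lambda>v. s * f v) = s\<^sup>2 * bform f f"
  unfolding bform_def by (simp add: sum_distrib_left power2_eq_square mult_ac)

lemma dform_scale: "dform (\<lambda>v. s * f v) (\<lambda>v. s * f v) = s\<^sup>2 * dform f f"
  unfolding dform_def by (simp add: sum_distrib_left power2_eq_square mult_ac)

lemma bform_add_scaled:
  "bform (\<lambda>v. f v + t * g v) (\<lambda>v. f v + t * g v)
    = bform f f + 2 * t * bform f g + t\<^sup>2 * bform g g"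
proof -
  have "bform (\<lambda>v. f v + t * g v) (\<lambda>v. f v + t * g v)
      = bform f f + t * bform f g + t * bform g f + t\<^sup>2 * bform g g"
    unfolding bform_def
    by (simp add: algebra_simps sum.distrib sum_distrib_left power2_eq_square)
  then show ?thesis by (simp add: bform_commute[of g f])
qed

lemma dform_add_scaled:
  "dform (\<lambda>v. f v + t * g v) (\<lambda>v. f v + t * g v)
    = dform f f + 2 * t * dform f g + t\<^sup>2 * dform g g"
  unfolding dform_def by (simp add: algebra_simps sum.distrib sum_distrib_left power2_eq_square)

lemma dform_self_nonneg: "0 \<le> dform f f"
  unfolding dform_def using d_pos by (intro sum_nonneg) (simp add: mult.assoc less_imp_le)

lemma dform_self_eq_0_iff: "dform f f = 0 \<longleftrightarrow> (\<forall>v\<in>V. f v = 0)"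
proof -
  have "dform f f = 0 \<longleftrightarrow> (\<forall>v\<in>V. d v * (f v * f v) = 0)"
    unfolding dform_def mult.assoc
    using finite_V d_pos by (intro sum_nonneg_eq_0_iff) (simp_all add: less_imp_le)
  then show ?thesis using d_pos by fastforce
qed

lemma dform_self_pos: "\<exists>v\<in>V. f v \<noteq> 0 \<Longrightarrow> 0 < dform f f"
  using dform_self_nonneg[of f] dform_self_eq_0_iff[of f] by auto

lemma bform_self_eq_0: "\<forall>v\<in>V. f v = 0 \<Longrightarrow> bform f f = 0"
  unfolding bform_def by simp

lemma bform_indicator: "u \<in> V \<Longrightarrow> bform f (indicator {u}) = (\<Sum>v\<in>V. b v u * f v)"
  unfolding bform_def using finite_V
  by (intro sum.cong)
    (simp_all add: indicator_def of_bool_def if_distrib[of "\<lambda>x. _ * x"] sum.delta' cong: if_cong)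

lemma dform_indicator: "u \<in> V \<Longrightarrow> dform f (indicator {u}) = d u * f u"
  unfolding dform_def using finite_V
  by (simp add: indicator_def of_bool_def if_distrib[of "\<lambda>x. _ * x"] sum.delta' cong: if_cong)

lemma bform_indicator_indicator:
  "v \<in> V \<Longrightarrow> w \<in> V \<Longrightarrow> bform (indicator {v}) (indicator {w}) = b v w"
  using finite_V
  by (simp add: bform_indicator indicator_def of_bool_def if_distrib[of "\<lambda>x. _ * x"] sum.delta'
      cong: if_cong)

lemma bform_eigen:
  assumes "is_eigen m f"
  shows "bform g f = m * dform g f"
proof -
  have "bform g f = (\<Sum>v\<in>V. g v * (\<Sum>w\<in>V. b v w * f w))"
    unfolding bform_def by (simp add: sum_distrib_left mult_ac)
  also have "\<dots> = (\<Sum>v\<in>V. g v * (m * d v * f v))"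
    using assms unfolding is_eigen_def by (intro sum.cong) auto
  also have "\<dots> = m * dform g f"
    unfolding dform_def by (simp add: sum_distrib_left mult_ac)
  finally show ?thesis .
qed

lemma dform_eigen_orthogonal:
  assumes "is_eigen m f" "is_eigen m' g" "m \<noteq> m'"
  shows "dform f g = 0"
proof -
  have "m * dform g f = m' * dform f g"
    using bform_eigen[OF assms(1), of g] bform_eigen[OF assms(2), of f] bform_commute[of f g] by simp
  then show ?thesis using assms(3) by (simp add: dform_commute)
qed

lemma d_mult_square_le_dform: "v \<in> V \<Longrightarrow> d v * (f v)\<^sup>2 \<le> dform f f"
  unfolding dform_def power2_eq_square mult.assoc
  using finite_V by (intro member_le_sum) (auto intro: mult_nonneg_nonneg less_imp_le[OF d_pos])

lemma exists_unit_minimizer: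
  assumes "V \<noteq> {}"
  obtains z where "dform z z = 1" "\<And>y. dform y y = 1 \<Longrightarrow> bform z z \<le> bform y y"
proof -
  define r where "r v = (if v \<in> V then 1 / sqrt (d v) else 0)" for v
  define S where "S = Pi UNIV (\<lambda>v. {- r v..r v}) \<inter> {z. dform z z = 1}"
  have restrict_in_S: "(\<lambda>v. if v \<in> V then y v else 0) \<in> S" if y: "dform y y = 1" for y
  proof -
    have "y v \<in> {- r v..r v}" if "v \<in> V" for v
    proof -
      have "0 < d v" using d_pos that .
      then have "(y v)\<^sup>2 \<le> (r v)\<^sup>2"
        using d_mult_square_le_dform[OF that, of y] y that
        by (simp add: r_def power_divide field_simps mult.commute)
      moreover have "0 \<le> r v" using \<open>0 < d v\<close> by (simp add: r_def)
      ultimately show ?thesis using abs_le_square_iff[of "y v" "r v"] by (simp add: abs_le_iff)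
    qed
    moreover have "dform (\<lambda>v. if v \<in> V then y v else 0) (\<lambda>v. if v \<in> V then y v else 0) = 1"
      using y by (subst dform_cong[of _ y _ y]) simp_all
    ultimately show ?thesis unfolding S_def by (auto simp: r_def)
  qed
  have "compact S"
    unfolding S_def dform_def
    by (intro compact_Int_closed compact_Pi_atLeastAtMost closed_Collect_eq continuous_intros)
  obtain u where "u \<in> V" using assms by blast
  have "dform (\<lambda>v. r u * indicator {u} v) (\<lambda>v. r u * indicator {u} v) = 1"
    unfolding dform_scale dform_indicator[OF \<open>u \<in> V\<close>]
    using \<open>u \<in> V\<close> d_pos[OF \<open>u \<in> V\<close>] by (simp add: r_def power_divide)
  then have "S \<noteq> {}" using restrict_in_S by blast
  moreover have "continuous_on S (\<lambda>z. bform z z)"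
    unfolding bform_def by (intro continuous_intros)
  ultimately obtain z where "z \<in> S" and z_min: "\<And>y. y \<in> S \<Longrightarrow> bform z z \<le> bform y y"
    using continuous_attains_inf[OF \<open>compact S\<close>] by blast
  show thesis
  proof
    show "dform z z = 1" using \<open>z \<in> S\<close> unfolding S_def by blast
    show "bform z z \<le> bform y y" if "dform y y = 1" for y
    proof -
      have "bform z z \<le> bform (\<lambda>v. if v \<in> V then y v else 0) (\<lambda>v. if v \<in> V then y v else 0)"
        using restrict_in_S[OF that] by (rule z_min)
      also have "\<dots> = bform y y" by (rule bform_cong) simp_all
      finally show ?thesis .
    qed
  qed
qed

lemma rayleigh_bound_of_unit_bound:
  assumes unit: "\<And>y. dform y y = 1 \<Longrightarrow> m \<le> bform y y"
  shows "m * dform y y \<le> bform y y"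
proof (cases "dform y y = 0")
  case True
  then show ?thesis using dform_self_eq_0_iff[of y] by (simp add: bform_self_eq_0)
next
  case False
  then have pos: "0 < dform y y" using dform_self_nonneg[of y] by simp
  define s where "s = 1 / sqrt (dform y y)"
  have s2: "s\<^sup>2 = 1 / dform y y" using pos by (simp add: s_def power_divide)
  then have "m \<le> bform (\<lambda>v. s * y v) (\<lambda>v. s * y v)"
    using pos by (intro unit) (simp add: dform_scale)
  then show ?thesis using s2 pos by (simp add: bform_scale pos_le_divide_eq)
qed

lemma rayleigh_minimizer_is_eigen:
  assumes lower: "\<And>y. m * dform y y \<le> bform y y" and z: "bform z z = m * dform z z"
  shows "is_eigen m z"
  unfolding is_eigen_def
proof
  fix u assume "u \<in> V"
  \<comment> \<open>First-order condition: the Rayleigh inequality at z + t 1_u is a quadratic in t that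
    vanishes at t = 0, so its linear coefficient (the u-th residual of the eigen equation) is 0.\<close>
  define X where "X = bform z (indicator {u}) - m * dform z (indicator {u})"
  define Y where "Y = bform (indicator {u}) (indicator {u}) - m * dform (indicator {u}) (indicator {u})"
  have "0 \<le> 2 * t * X + t\<^sup>2 * Y" for t
  proof -
    let ?y = "\<lambda>v. z v + t * indicator {u} v"
    have "0 \<le> bform ?y ?y - m * dform ?y ?y" using lower[of ?y] by simp
    also have "\<dots> = 2 * t * X + t\<^sup>2 * Y"
      unfolding bform_add_scaled dform_add_scaled X_def Y_def z by (simp add: algebra_simps)
    finally show ?thesis .
  qed
  then have "X = 0" by (rule quadratic_nonneg_imp_linear_coeff_eq_0)
  then have "(\<Sum>v\<in>V. b v u * z v) = m * d u * z u"
    unfolding X_def using \<open>u \<in> V\<close> by (simp add: bform_indicator dform_indicator)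
  moreover have "(\<Sum>v\<in>V. b v u * z v) = (\<Sum>w\<in>V. b u w * z w)"
    using \<open>u \<in> V\<close> b_commute by (intro sum.cong) auto
  ultimately show "(\<Sum>w\<in>V. b u w * z w) = m * d u * z u" by simp
qed

lemma exists_least_eigenvalue:
  assumes "V \<noteq> {}"
  obtains m where "m \<in> eigenvalues" "\<And>y. m * dform y y \<le> bform y y"
proof -
  obtain z where "dform z z = 1" "\<And>y. dform y y = 1 \<Longrightarrow> bform z z \<le> bform y y"
    using exists_unit_minimizer[OF assms] by blast
  then have z: "dform z z = 1" "\<And>y. bform z z * dform y y \<le> bform y y"
    using rayleigh_bound_of_unit_bound by blast+
  have "is_eigen (bform z z) z"
    using z by (intro rayleigh_minimizer_is_eigen) simp_all
  moreover have "\<exists>v\<in>V. z v \<noteq> 0" using z(1) dform_self_eq_0_iff[of z] by auto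
  ultimately show thesis using that z(2) unfolding eigenvalues_def by blast
qed

lemma card_dform_orthogonal_le:
  assumes "finite F"
    and pos: "\<And>f. f \<in> F \<Longrightarrow> 0 < dform f f"
    and orth: "\<And>f g. f \<in> F \<Longrightarrow> g \<in> F \<Longrightarrow> f \<noteq> g \<Longrightarrow> dform f g = 0"
    and supp: "\<And>f x. f \<in> F \<Longrightarrow> x \<notin> V \<Longrightarrow> f x = 0"
  shows "card F \<le> card V"
proof -
  interpret vs: vector_space "\<lambda>(s::real) (f::'a \<Rightarrow> real) x. s * f x"
    by unfold_locales (simp_all add: fun_eq_iff algebra_simps)
  have "vs.independent F"
  proof (rule vs.independent_if_scalars_zero[OF \<open>finite F\<close>])
    fix u f assume sum0: "(\<Sum>g\<in>F. (\<lambda>x. u g * g x)) = 0" and "f \<in> F"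
    have "0 = dform f (\<Sum>g\<in>F. (\<lambda>x. u g * g x))" using sum0 by (simp add: dform_def)
    also have "\<dots> = (\<Sum>v\<in>V. \<Sum>g\<in>F. u g * (d v * f v * g v))"
      unfolding dform_def sum_fun_apply by (simp add: sum_distrib_left mult_ac)
    also have "\<dots> = (\<Sum>g\<in>F. u g * dform f g)"
      unfolding dform_def sum_distrib_left by (rule sum.swap)
    also have "\<dots> = u f * dform f f + (\<Sum>g\<in>F - {f}. u g * dform f g)"
      by (rule sum.remove[OF \<open>finite F\<close> \<open>f \<in> F\<close>])
    also have "(\<Sum>g\<in>F - {f}. u g * dform f g) = 0"
      using orth \<open>f \<in> F\<close> by (intro sum.neutral) auto
    finally show "u f = 0" using pos[OF \<open>f \<in> F\<close>] by simp
  qed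
  moreover have "F \<subseteq> vs.span ((\<lambda>u. indicator {u}) ` V)"
  proof
    fix f assume "f \<in> F"
    have "f = (\<Sum>u\<in>V. (\<lambda>x. f u * indicator {u} x))"
      using finite_V supp[OF \<open>f \<in> F\<close>]
      by (auto simp: fun_eq_iff sum_fun_apply indicator_def of_bool_def if_distrib[of "\<lambda>x. _ * x"]
          sum.delta cong: if_cong)
    also have "\<dots> \<in> vs.span ((\<lambda>u. indicator {u}) ` V)"
      by (intro vs.span_sum vs.span_scale vs.span_base imageI)
    finally show "f \<in> vs.span ((\<lambda>u. indicator {u}) ` V)" .
  qed
  ultimately have "card F \<le> card ((\<lambda>u. indicator {u} :: 'a \<Rightarrow> real) ` V)"
    using vs.independent_span_bound finite_V by blast
  also have "\<dots> \<le> card V" using finite_V by (rule card_image_le)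
  finally show ?thesis .
qed

lemma is_eigen_restrict: "is_eigen m (\<lambda>x. if x \<in> V then f x else 0) \<longleftrightarrow> is_eigen m f"
  unfolding is_eigen_def by (simp cong: sum.cong)

lemma finite_eigenvalues: "finite eigenvalues"
proof (rule ccontr)
  assume "infinite eigenvalues"
  then obtain T where T: "finite T" "card T = Suc (card V)" "T \<subseteq> eigenvalues"
    using infinite_arbitrarily_large by blast
  have "\<forall>m\<in>eigenvalues. \<exists>f. (\<exists>v\<in>V. f v \<noteq> 0) \<and> is_eigen m f"
    unfolding eigenvalues_def by blast
  from bchoice[OF this] obtain vec
    where vec: "\<forall>m\<in>eigenvalues. (\<exists>v\<in>V. vec m v \<noteq> 0) \<and> is_eigen m (vec m)"
    by blast
  define G where "G m = (\<lambda>x. if x \<in> V then vec m x else 0)" for m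
  have G: "(\<exists>v\<in>V. G m v \<noteq> 0) \<and> is_eigen m (G m)" if "m \<in> T" for m
    using vec T(3) that unfolding G_def is_eigen_restrict by auto
  then have pos: "0 < dform (G m) (G m)" if "m \<in> T" for m
    using that dform_self_pos by blast
  have orth: "dform (G m) (G m') = 0" if "m \<in> T" "m' \<in> T" "m \<noteq> m'" for m m'
    using G that by (blast intro: dform_eigen_orthogonal)
  have "inj_on G T"
  proof (rule inj_onI)
    fix m m' assume "m \<in> T" "m' \<in> T" "G m = G m'"
    then show "m = m'" using pos[of m] orth[of m m'] by fastforce
  qed
  have "card (G ` T) \<le> card V"
  proof (rule card_dform_orthogonal_le)
    show "finite (G ` T)" using T(1) by simp
  qed (use pos orth in \<open>auto simp: G_def\<close>)
  then show False using card_image[OF \<open>inj_on G T\<close>] T(2) by simp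
qed

lemma eigenvalues_nonempty: "V \<noteq> {} \<Longrightarrow> eigenvalues \<noteq> {}"
  using exists_least_eigenvalue by blast

lemma Min_eigenvalues_le_rayleigh:
  assumes "V \<noteq> {}"
  shows "Min eigenvalues * dform y y \<le> bform y y"
proof -
  obtain m where m: "m \<in> eigenvalues" "\<And>y. m * dform y y \<le> bform y y"
    using exists_least_eigenvalue[OF assms] by blast
  have "m \<le> \<mu>" if \<mu>: "\<mu> \<in> eigenvalues" for \<mu>
  proof -
    obtain x where x: "\<exists>v\<in>V. x v \<noteq> 0" "is_eigen \<mu> x"
      using \<mu> unfolding eigenvalues_def by blast
    have "m * dform x x \<le> \<mu> * dform x x" using m(2)[of x] bform_eigen[OF x(2)] by simp
    then show ?thesis using dform_self_pos[OF x(1)] by simp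
  qed
  then have "Min eigenvalues = m" using m(1) finite_eigenvalues by (intro Min_eqI) auto
  then show ?thesis using m(2) by simp
qed

lemma sum_bform_mult:
  "(\<Sum>p\<in>P. bform (\<lambda>v. \<phi> p v * x v) (\<lambda>v. \<phi> p v * x v))
    = (\<Sum>v\<in>V. \<Sum>w\<in>V. b v w * x v * x w * (\<Sum>p\<in>P. \<phi> p v * \<phi> p w))"
proof -
  have "(\<Sum>p\<in>P. bform (\<lambda>v. \<phi> p v * x v) (\<lambda>v. \<phi> p v * x v))
      = (\<Sum>p\<in>P. \<Sum>v\<in>V. \<Sum>w\<in>V. b v w * x v * x w * (\<phi> p v * \<phi> p w))"
    unfolding bform_def by (simp add: mult_ac)
  also have "\<dots> = (\<Sum>v\<in>V. \<Sum>p\<in>P. \<Sum>w\<in>V. b v w * x v * x w * (\<phi> p v * \<phi> p w))"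
    by (rule sum.swap)
  also have "\<dots> = (\<Sum>v\<in>V. \<Sum>w\<in>V. \<Sum>p\<in>P. b v w * x v * x w * (\<phi> p v * \<phi> p w))"
    by (intro sum.cong refl sum.swap)
  finally show ?thesis by (simp add: sum_distrib_left)
qed

lemma sum_dform_mult:
  "(\<Sum>p\<in>P. dform (\<lambda>v. \<phi> p v * x v) (\<lambda>v. \<phi> p v * x v))
    = (\<Sum>v\<in>V. d v * x v * x v * (\<Sum>p\<in>P. \<phi> p v * \<phi> p v))"
proof -
  have "(\<Sum>p\<in>P. dform (\<lambda>v. \<phi> p v * x v) (\<lambda>v. \<phi> p v * x v))
      = (\<Sum>p\<in>P. \<Sum>v\<in>V. d v * x v * x v * (\<phi> p v * \<phi> p v))"
    unfolding dform_def by (simp add: mult_ac)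
  also have "\<dots> = (\<Sum>v\<in>V. \<Sum>p\<in>P. d v * x v * x v * (\<phi> p v * \<phi> p v))"
    by (rule sum.swap)
  finally show ?thesis by (simp add: sum_distrib_left)
qed

lemma hoffman_bound:
  fixes c :: "'a \<Rightarrow> 'c"
  assumes "finite C" and c: "independent_coloring c C"
    and x: "is_eigen M x" "\<exists>v\<in>V. x v \<noteq> 0"
    and lower: "\<And>y. m * dform y y \<le> bform y y"
  shows "M + (real (card C) - 1) * m \<le> 0"
proof -
  have colors: "\<And>v. v \<in> V \<Longrightarrow> c v \<in> C"
    and proper: "\<And>v w. v \<in> V \<Longrightarrow> w \<in> V \<Longrightarrow> c v = c w \<Longrightarrow> b v w = 0"
    using c unfolding independent_coloring_def by blast+
  define \<phi> :: "'c \<times> 'c \<Rightarrow> 'a \<Rightarrow> real"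
    where "\<phi> p v = of_bool (c v = fst p) - of_bool (c v = snd p)" for p v
  define z where "z p v = \<phi> p v * x v" for p v
  have kernel: "(\<Sum>p\<in>C \<times> C. \<phi> p v * \<phi> p w) = 2 * real (card C) * of_bool (c v = c w) - 2"
    if "v \<in> V" "w \<in> V" for v w
    using sum_color_difference_products[OF \<open>finite C\<close> colors[OF that(1)] colors[OF that(2)]]
    unfolding \<phi>_def by (simp add: case_prod_unfold)
  have "(\<Sum>p\<in>C \<times> C. bform (z p) (z p)) = (\<Sum>v\<in>V. \<Sum>w\<in>V. -2 * (b v w * x v * x w))"
    unfolding z_def sum_bform_mult by (intro sum.cong refl) (auto simp: kernel proper)
  also have "\<dots> = -2 * bform x x"
    unfolding bform_def by (simp add: sum_distrib_left)
  also have "\<dots> = -2 * (M * dform x x)"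
    using bform_eigen[OF x(1)] by simp
  finally have bsum: "(\<Sum>p\<in>C \<times> C. bform (z p) (z p)) = -2 * (M * dform x x)" .
  have "(\<Sum>p\<in>C \<times> C. dform (z p) (z p)) = (\<Sum>v\<in>V. (2 * real (card C) - 2) * (d v * x v * x v))"
    unfolding z_def sum_dform_mult by (intro sum.cong refl) (auto simp: kernel)
  also have "\<dots> = (2 * real (card C) - 2) * dform x x"
    unfolding dform_def by (simp add: sum_distrib_left)
  finally have dsum: "(\<Sum>p\<in>C \<times> C. dform (z p) (z p)) = (2 * real (card C) - 2) * dform x x" .
  have "0 \<le> (\<Sum>p\<in>C \<times> C. bform (z p) (z p) - m * dform (z p) (z p))"
    using lower by (intro sum_nonneg) (simp add: algebra_simps)
  also have "\<dots> = -2 * dform x x * (M + (real (card C) - 1) * m)"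
    by (simp add: sum_subtractf sum_distrib_left[symmetric] bsum dsum algebra_simps)
  finally show ?thesis using dform_self_pos[OF x(2)] by (simp add: mult_le_0_iff)
qed

lemma hoffman_Max_Min:
  assumes "V \<noteq> {}" "finite C" "independent_coloring c C"
  shows "Max eigenvalues + (real (card C) - 1) * Min eigenvalues \<le> 0"
proof -
  have "Max eigenvalues \<in> eigenvalues"
    using finite_eigenvalues eigenvalues_nonempty[OF assms(1)] by (rule Max_in)
  then obtain x where x: "is_eigen (Max eigenvalues) x" "\<exists>v\<in>V. x v \<noteq> 0"
    unfolding eigenvalues_def by blast
  show ?thesis
    by (rule hoffman_bound[OF assms(2,3) x Min_eigenvalues_le_rayleigh[OF assms(1)]])
qed

lemma symmetric_pencil_uminus: "symmetric_pencil V (\<lambda>v w. - b v w) d"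
  using finite_V b_commute d_pos by unfold_locales auto

lemma uminus_eigenvalues: "symmetric_pencil.eigenvalues V (\<lambda>v w. - b v w) d = uminus ` eigenvalues"
proof -
  interpret neg: symmetric_pencil V "\<lambda>v w. - b v w" d by (rule symmetric_pencil_uminus)
  have "neg.is_eigen m f \<longleftrightarrow> is_eigen (- m) f" for m f
    unfolding neg.is_eigen_def is_eigen_def by (auto simp: sum_negf)
  then show ?thesis
    unfolding neg.eigenvalues_def eigenvalues_def
    by (force simp: image_iff minus_equation_iff[of _ "_ :: real"])
qed

lemma rayleigh_le_Max_eigenvalues:
  assumes "V \<noteq> {}"
  shows "bform y y \<le> Max eigenvalues * dform y y"
proof -
  interpret neg: symmetric_pencil V "\<lambda>v w. - b v w" d by (rule symmetric_pencil_uminus)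
  have "Min neg.eigenvalues = - Max eigenvalues"
    unfolding uminus_eigenvalues
    using finite_eigenvalues eigenvalues_nonempty[OF assms] by simp
  moreover have "neg.bform y y = - bform y y"
    unfolding neg.bform_def bform_def by (simp add: sum_negf)
  ultimately show ?thesis using neg.Min_eigenvalues_le_rayleigh[OF assms, of y] by simp
qed

lemma hoffman_Min_Max:
  assumes "V \<noteq> {}" "finite C" "independent_coloring c C"
  shows "0 \<le> Min eigenvalues + (real (card C) - 1) * Max eigenvalues"
proof -
  interpret neg: symmetric_pencil V "\<lambda>v w. - b v w" d by (rule symmetric_pencil_uminus)
  have "Max neg.eigenvalues + (real (card C) - 1) * Min neg.eigenvalues \<le> 0"
    using assms by (intro neg.hoffman_Max_Min) (auto simp: independent_coloring_def neg.independent_coloring_def)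
  moreover have "Max neg.eigenvalues = - Min eigenvalues" "Min neg.eigenvalues = - Max eigenvalues"
    unfolding uminus_eigenvalues
    using finite_eigenvalues eigenvalues_nonempty[OF assms(1)] by simp_all
  ultimately show ?thesis by simp
qed

lemma eigenvalues_signs:
  assumes "\<And>u. u \<in> V \<Longrightarrow> b u u = 0" and "v \<in> V" "w \<in> V" "b v w \<noteq> 0"
  shows "Min eigenvalues < 0" "0 < Max eigenvalues"
proof -
  have "V \<noteq> {}" using \<open>v \<in> V\<close> by blast
  define y :: "real \<Rightarrow> 'a \<Rightarrow> real" where "y t u = indicator {v} u + t * indicator {w} u" for t u
  have bform_y: "bform (y t) (y t) = 2 * t * b v w" for t
    unfolding y_def bform_add_scaled using assms by (simp add: bform_indicator_indicator)
  have "0 < b v w * b v w" using \<open>b v w \<noteq> 0\<close> by (auto simp: zero_less_mult_iff linorder_neq_iff)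
  then have "Min eigenvalues * dform (y (- b v w)) (y (- b v w)) < 0"
    using Min_eigenvalues_le_rayleigh[OF \<open>V \<noteq> {}\<close>, of "y (- b v w)"] bform_y[of "- b v w"] by simp
  then show "Min eigenvalues < 0"
    using dform_self_nonneg[of "y (- b v w)"] by (auto simp: mult_less_0_iff)
  have "0 < Max eigenvalues * dform (y (b v w)) (y (b v w))"
    using rayleigh_le_Max_eigenvalues[OF \<open>V \<noteq> {}\<close>, of "y (b v w)"] bform_y[of "b v w"]
      \<open>0 < b v w * b v w\<close>
    by simp
  then show "0 < Max eigenvalues"
    using dform_self_nonneg[of "y (b v w)"] by (auto simp: zero_less_mult_iff)
qed

end

lemma adj_commute: "adj E phi v w = adj E phi w v"
proof -
  have "{e \<in> E. v \<in> e \<and> w \<in> e \<and> phi v e = - phi w e}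
      = {e \<in> E. w \<in> e \<and> v \<in> e \<and> phi w e = - phi v e}"
    and "{e \<in> E. v \<in> e \<and> w \<in> e \<and> phi v e = phi w e}
      = {e \<in> E. w \<in> e \<and> v \<in> e \<and> phi w e = phi v e}"
    by auto
  then show ?thesis unfolding adj_def by simp
qed

lemma adj_eq_0_if_same_color:
  assumes "strong_coloring V E k c" "c v = c w"
  shows "adj E phi v w = 0"
proof (cases "v = w")
  case False
  then have no_edges: "{e \<in> E. v \<in> e \<and> w \<in> e \<and> phi v e = - phi w e} = {}"
      "{e \<in> E. v \<in> e \<and> w \<in> e \<and> phi v e = phi w e} = {}"
    using assms unfolding strong_coloring_def by blast+
  show ?thesis unfolding adj_def no_edges by simp
qed (simp add: adj_def)

lemma strong_coloring_chromatic_number: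
  assumes "finite V" "E \<subseteq> Pow V"
  obtains c where "strong_coloring V E (chromatic_number V E) c"
proof -
  obtain f :: "'a \<Rightarrow> nat" and n where f: "f ` V = {i. i < n}" "inj_on f V"
    using finite_imp_inj_to_nat_seg[OF assms(1)] by metis
  have "strong_coloring V E n (\<lambda>v. Suc (f v))"
    unfolding strong_coloring_def
  proof (intro conjI ballI impI)
    show "Suc (f v) \<in> {1..n}" if "v \<in> V" for v
    proof -
      have "f v \<in> f ` V" using that by (rule imageI)
      then show ?thesis using f(1) by simp
    qed
    show "Suc (f v) \<noteq> Suc (f w)" if "e \<in> E" "v \<in> e" "w \<in> e" "v \<noteq> w" for e v w
    proof -
      have "v \<in> V" "w \<in> V" using that assms(2) by auto
      then show ?thesis using f(2) \<open>v \<noteq> w\<close> by (simp add: inj_on_eq_iff)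
    qed
  qed
  then have "\<exists>k c. strong_coloring V E k c" by blast
  then have "\<exists>c. strong_coloring V E (chromatic_number V E) c"
    unfolding chromatic_number_def by (rule LeastI_ex)
  then show thesis using that by blast
qed

lemma symmetric_pencil_adjacency:
  assumes "oriented_hypergraph V E phi"
  shows "symmetric_pencil V (\<lambda>v w. real_of_int (adj E phi v w)) (\<lambda>v. real (deg E v))"
  using assms unfolding oriented_hypergraph_def
  by unfold_locales (auto simp: adj_commute[of E phi])

abbreviation adjacency_eigenvalues :: "'a set \<Rightarrow> 'a set set \<Rightarrow> ('a \<Rightarrow> 'a set \<Rightarrow> int) \<Rightarrow> real set" where
  "adjacency_eigenvalues V E phi \<equiv>
     symmetric_pencil.eigenvalues V (\<lambda>v w. real_of_int (adj E phi v w)) (\<lambda>v. real (deg E v))"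

lemma laplacian_eigenvalues_eq:
  assumes "oriented_hypergraph V E phi"
  shows "laplacian_eigenvalues V E phi
    = (\<lambda>m. 1 - m) ` adjacency_eigenvalues V E phi"
proof -
  interpret A: symmetric_pencil V "\<lambda>v w. real_of_int (adj E phi v w)" "\<lambda>v. real (deg E v)"
    using assms by (rule symmetric_pencil_adjacency)
  have "norm_laplacian V E phi f v = \<mu> * f v
      \<longleftrightarrow> (\<Sum>w\<in>V. real_of_int (adj E phi v w) * f w) = (1 - \<mu>) * real (deg E v) * f v"
    if "v \<in> V" for \<mu> f v
    using A.d_pos[OF that] unfolding norm_laplacian_def by (auto simp: field_simps)
  then have "(\<forall>v\<in>V. norm_laplacian V E phi f v = \<mu> * f v) \<longleftrightarrow> A.is_eigen (1 - \<mu>) f" for \<mu> f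
    unfolding A.is_eigen_def by simp
  then have "\<mu> \<in> laplacian_eigenvalues V E phi \<longleftrightarrow> 1 - \<mu> \<in> A.eigenvalues" for \<mu>
    unfolding laplacian_eigenvalues_def A.eigenvalues_def by simp
  then show ?thesis by (force simp: image_iff eq_diff_eq)
qed

lemma lambda_min_max_eq:
  assumes "oriented_hypergraph V E phi" "V \<noteq> {}"
  shows "lambda_min V E phi = 1 - Max (adjacency_eigenvalues V E phi)"
    and "lambda_max V E phi = 1 - Min (adjacency_eigenvalues V E phi)"
proof -
  interpret A: symmetric_pencil V "\<lambda>v w. real_of_int (adj E phi v w)" "\<lambda>v. real (deg E v)"
    using assms(1) by (rule symmetric_pencil_adjacency)
  show "lambda_min V E phi = 1 - Max A.eigenvalues" "lambda_max V E phi = 1 - Min A.eigenvalues"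
    unfolding lambda_min_def lambda_max_def laplacian_eigenvalues_eq[OF assms(1)]
    using A.finite_eigenvalues A.eigenvalues_nonempty[OF assms(2)]
    by (simp_all add: Min_image_diff Max_image_diff)
qed

theorem mainTheorem1:
  fixes V :: "'a set" and E :: "'a set set" and phi :: "'a \<Rightarrow> 'a set \<Rightarrow> int"
  assumes "oriented_hypergraph V E phi"
    and "\<exists>v\<in>V. \<exists>w\<in>V. adj E phi v w \<noteq> 0"
  shows "lambda_min V E phi < 1 \<and> 1 < lambda_max V E phi \<and>
         real (chromatic_number V E) \<ge>
           (lambda_max V E phi - lambda_min V E phi) /
           min (lambda_max V E phi - 1) (1 - lambda_min V E phi)"
proof -
  interpret A: symmetric_pencil V "\<lambda>v w. real_of_int (adj E phi v w)" "\<lambda>v. real (deg E v)"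
    using assms(1) by (rule symmetric_pencil_adjacency)
  obtain v w where vw: "v \<in> V" "w \<in> V" "adj E phi v w \<noteq> 0" using assms(2) by blast
  then have "V \<noteq> {}" by blast
  have signs: "Min A.eigenvalues < 0" "0 < Max A.eigenvalues"
    using A.eigenvalues_signs vw by (simp_all add: adj_def)
  have "finite V" "E \<subseteq> Pow V" using assms(1) unfolding oriented_hypergraph_def by simp_all
  then obtain c where c: "strong_coloring V E (chromatic_number V E) c"
    by (rule strong_coloring_chromatic_number)
  let ?k = "chromatic_number V E"
  have coloring: "A.independent_coloring c {1..?k}"
    using c adj_eq_0_if_same_color[OF c]
    unfolding A.independent_coloring_def strong_coloring_def by simp
  have "Max A.eigenvalues - Min A.eigenvalues \<le> real ?k * (- Min A.eigenvalues)"
    and "Max A.eigenvalues - Min A.eigenvalues \<le> real ?k * Max A.eigenvalues"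
    using A.hoffman_Max_Min[OF \<open>V \<noteq> {}\<close> finite_atLeastAtMost coloring]
      A.hoffman_Min_Max[OF \<open>V \<noteq> {}\<close> finite_atLeastAtMost coloring]
    by (simp_all add: algebra_simps)
  then show ?thesis
    unfolding lambda_min_max_eq[OF assms(1) \<open>V \<noteq> {}\<close>] using signs divide_min_le by simp
qed

end
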